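(* Let $n\ge1$, let $f(x)=\sum_{i=0}^{n-1}a_ix^i$ and $g(x)=\sum_{i=0}^{n-1}b_ix^i$ be polynomials over $\mathbb{R}$, and let $\mathfrak{h}=f(\mathfrak{r})+\mathfrak{s}g(\mathfrak{r})\in\mathbb{R}[D_{2n}]$. Then the eigenvalues of the matrix $A(\mathfrak{h})A(\mathfrak{h})^T$ are $(|f(\xi^i)|\pm|g(\xi^i)|)^2$ for $i=0,1,\dots,n-1$, where $\xi=e^{2\pi\sqrt{-1}/n}$ and $|\cdot|$ is the complex absolute value. Consequently $|\mathfrak{h}|_{\rm Mat}\le\max\{|f(\xi^i)|+|g(\xi^i)| : i=0,1,\dots,n-1\}$.
   Context: $D_{2n}$ is the dihedral group of order $2n$ generated by $\mathfrak{r},\mathfrak{s}$ with $\mathfrak{r}^n=\mathfrak{s}^2=1$, $\mathfrak{s}\mathfrak{r}\mathfrak{s}=\mathfrak{r}^{-1}$. The group ring $\mathbb{R}[D_{2n}]$ is identified with $\mathbb{R}^{2n}$ via the basis of group elements (coefficient embedding). For $\mathfrak{h}\in\mathbb{R}[D_{2n}]$, $A(\mathfrak{h})$ is the $2n\times2n$ real matrix of the linear map $x\mapsto\mathfrak{h}x$ on $\mathbb{R}[D_{2n}]$ (the regular representation applied to $\mathfrak{h}$). The matrix norm is $|\mathfrak{h}|_{\rm Mat}=\sqrt{\text{largest eigenvalue of }A(\mathfrak{h})A(\mathfrak{h})^T}$. *)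

theory Defs
  imports "Jordan_Normal_Form.Char_Poly"
begin

text \<open>Elements of the dihedral group D_{2n} are encoded as pairs (e,k) with e < 2, k < n,
  standing for s^e r^k.  Product: (s^e r^k)(s^e' r^k') = s^(e+e') r^(k+k') if e' = 0
  and = s^(e+1) r^(k'-k) if e' = 1 (using r^k s = s r^(-k)).\<close>

definition dih_carrier :: "nat \<Rightarrow> (nat \<times> nat) set" where
  "dih_carrier n = {0..<2} \<times> {0..<n}"

definition dih_mult :: "nat \<Rightarrow> nat \<times> nat \<Rightarrow> nat \<times> nat \<Rightarrow> nat \<times> nat" where
  "dih_mult n x y = (case x of (e, k) \<Rightarrow> case y of (e', k') \<Rightarrow>
     ((e + e') mod 2, (if e' = 0 then k + k' else k' + n - k) mod n))"

definition dih_elem :: "nat \<Rightarrow> nat \<Rightarrow> nat \<times> nat" where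
  "dih_elem n i = (i div n, i mod n)"

definition gr_mult :: "nat \<Rightarrow> (nat \<times> nat \<Rightarrow> real) \<Rightarrow> (nat \<times> nat \<Rightarrow> real) \<Rightarrow> (nat \<times> nat \<Rightarrow> real)" where
  "gr_mult n u v = (\<lambda>z. \<Sum>x\<in>dih_carrier n. \<Sum>y\<in>dih_carrier n.
       (if dih_mult n x y = z then u x * v y else 0))"

definition gr_basis :: "nat \<times> nat \<Rightarrow> (nat \<times> nat \<Rightarrow> real)" where
  "gr_basis g = (\<lambda>z. if z = g then 1 else 0)"

definition regmat :: "nat \<Rightarrow> (nat \<times> nat \<Rightarrow> real) \<Rightarrow> real mat" where
  "regmat n h = mat (2*n) (2*n)
     (\<lambda>(i, j). gr_mult n h (gr_basis (dih_elem n j)) (dih_elem n i))"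

text \<open>The element f(r) + s g(r), f = sum a_i x^i, g = sum b_i x^i (deg < n).\<close>

definition dih_elt :: "nat \<Rightarrow> (nat \<Rightarrow> real) \<Rightarrow> (nat \<Rightarrow> real) \<Rightarrow> (nat \<times> nat \<Rightarrow> real)" where
  "dih_elt n a b = (\<lambda>(e, k). if k < n then (if e = 0 then a k else if e = 1 then b k else 0) else 0)"

definition mat_norm :: "nat \<Rightarrow> (nat \<times> nat \<Rightarrow> real) \<Rightarrow> real" where
  "mat_norm n h = sqrt (Max {t. eigenvalue (regmat n h * transpose_mat (regmat n h)) t})"

definition poly_at :: "nat \<Rightarrow> (nat \<Rightarrow> real) \<Rightarrow> complex \<Rightarrow> complex" where
  "poly_at n a z = (\<Sum>k<n. complex_of_real (a k) * z ^ k)"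

end

theory Submission
  imports Defs
begin

text \<open>Fix an n-th root of unity z = \<xi>^i and put F = f(z), G = g(z). The vectors
  (c0 z^k)_{k<n} followed by (c1 z^k)_{k<n} span a subspace invariant under A = A(h) and A^T, and
  A A^T acts on the coordinates (c0, c1) as a 2x2 matrix with eigenvectors (1, \<plusminus>\<sigma>), \<sigma> the phase
  of F * cnj G, and eigenvalues (|F| \<plusminus> |G|)^2. For i < n these 2n eigenvectors are pairwise
  orthogonal, hence they diagonalise A A^T. The norm bound follows from (|F| - |G|)^2 \<le> (|F| + |G|)^2.\<close>

lemma add_mod_eq_iff:
  assumes "k < n" "k' < n" "m < (n::nat)"
  shows "(k + k') mod n = m \<longleftrightarrow> k = (m + n - k') mod n"
proof (cases "k + k' < n")
  case True
  then show ?thesis using assms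
    by (cases "m < k'") (auto simp: le_mod_geq)
next
  case False
  then have "(k + k') mod n = k + k' - n" using assms by (simp add: le_mod_geq)
  then show ?thesis using assms False
    by (cases "m < k'") (auto simp: le_mod_geq)
qed

lemma diff_mod_eq_iff:
  assumes "k < n" "k' < n" "m < (n::nat)"
  shows "(k' + n - k) mod n = m \<longleftrightarrow> k = (k' + n - m) mod n"
  using assms by (cases "k \<le> k'"; cases "m \<le> k'") (auto simp: le_mod_geq)

lemma neg_diff_mod:
  assumes "k < n" "k' < (n::nat)"
  shows "(n - (k + n - k') mod n) mod n = (k' + n - k) mod n"
  using assms by (cases "k < k'"; cases "k' < k") (auto simp: le_mod_geq mod_if)

lemma dih_mult_eq_iff:
  assumes "e < 2" "k < n" "e' < 2" "k' < n" "e2 < 2" "m < n"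
  shows "dih_mult n (e,k) (e',k') = (e2,m) \<longleftrightarrow>
     (e,k) = (if e' = 0 then (e2, (m + n - k') mod n) else (1 - e2, (k' + n - m) mod n))"
proof (cases "e' = 0")
  case True
  then show ?thesis using assms add_mod_eq_iff[OF assms(2,4,6)]
    by (auto simp: dih_mult_def)
next
  case False
  then have "e' = 1" using assms by auto
  moreover have "(e + 1) mod 2 = e2 \<longleftrightarrow> e = 1 - e2" using assms
    by (cases e; cases e2) auto
  ultimately show ?thesis using assms diff_mod_eq_iff[OF assms(2,4,6)]
    by (auto simp: dih_mult_def)
qed

lemma finite_dih_carrier: "finite (dih_carrier n)"
  unfolding dih_carrier_def by auto

lemma gr_mult_gr_basis:
  assumes "y \<in> dih_carrier n"
  shows "gr_mult n u (gr_basis y) z = (\<Sum>x\<in>dih_carrier n. if dih_mult n x y = z then u x else 0)"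
  unfolding gr_mult_def gr_basis_def
proof (rule sum.cong[OF refl])
  fix x
  have eq: "(\<lambda>y'. if dih_mult n x y' = z then u x * (if y' = y then 1 else 0) else 0)
     = (\<lambda>y'. if y' = y then (if dih_mult n x y = z then u x else 0) else 0)" by auto
  show "(\<Sum>y'\<in>dih_carrier n. if dih_mult n x y' = z then u x * (if y' = y then 1 else 0) else 0)
     = (if dih_mult n x y = z then u x else 0)"
    unfolding eq using assms finite_dih_carrier by simp
qed

lemma dim_regmat [simp]: "dim_row (regmat n h) = 2*n" "dim_col (regmat n h) = 2*n"
  by (simp_all add: regmat_def)

lemma regmat_carrier: "regmat n h \<in> carrier_mat (2*n) (2*n)"
  by (simp add: carrier_matI)

lemma regmat_dih_elt_index:
  assumes "t < 2*n" "u < 2*n"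
  shows "regmat n (dih_elt n a b) $$ (t,u) =
    (if u < n then (if t < n then a ((t mod n + n - u mod n) mod n) else b ((t mod n + n - u mod n) mod n))
     else (if t < n then b ((u mod n + n - t mod n) mod n) else a ((u mod n + n - t mod n) mod n)))"
proof -
  have n: "n > 0" using assms by auto
  have div: "t div n < 2" "u div n < 2" using assms by (auto simp: less_mult_imp_div_less)
  have mod: "t mod n < n" "u mod n < n" using n by auto
  have u: "(u div n, u mod n) \<in> dih_carrier n" using div mod by (auto simp: dih_carrier_def)
  define x0 where "x0 = (if u div n = 0 then (t div n, (t mod n + n - u mod n) mod n)
      else (1 - t div n, (u mod n + n - t mod n) mod n))"
  have x0: "x0 \<in> dih_carrier n" using div n by (auto simp: x0_def dih_carrier_def)
  have "regmat n (dih_elt n a b) $$ (t,u) =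
      (\<Sum>x\<in>dih_carrier n. if dih_mult n x (u div n, u mod n) = (t div n, t mod n) then dih_elt n a b x else 0)"
    using assms u unfolding regmat_def by (simp add: dih_elem_def gr_mult_gr_basis)
  also have "\<dots> = (\<Sum>x\<in>dih_carrier n. if x = x0 then dih_elt n a b x else 0)"
  proof (rule sum.cong[OF refl])
    fix x assume "x \<in> dih_carrier n"
    then obtain e k where x: "x = (e,k)" "e < 2" "k < n" by (auto simp: dih_carrier_def)
    have "dih_mult n x (u div n, u mod n) = (t div n, t mod n) \<longleftrightarrow> x = x0"
      unfolding x x0_def by (rule dih_mult_eq_iff) (use x div mod in auto)
    then show "(if dih_mult n x (u div n, u mod n) = (t div n, t mod n) then dih_elt n a b x else 0)
        = (if x = x0 then dih_elt n a b x else 0)" by simp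
  qed
  also have "\<dots> = dih_elt n a b x0" using x0 finite_dih_carrier by simp
  finally show ?thesis using div n assms
    by (auto simp: x0_def dih_elt_def less_2_cases_iff div_eq_0_iff)
qed

text \<open>The coefficients of f(r^{-1}) = f(r^{n-1}).\<close>

definition reflect_coeffs :: "nat \<Rightarrow> (nat \<Rightarrow> real) \<Rightarrow> nat \<Rightarrow> real" where
  "reflect_coeffs n a k = a ((n - k) mod n)"

text \<open>A(h)^T = A(h^*) for the anti-involution induced by g \<mapsto> g^{-1}; as s r^k is its own
  inverse, only f is reflected.\<close>

lemma transpose_regmat_dih_elt:
  "transpose_mat (regmat n (dih_elt n a b)) = regmat n (dih_elt n (reflect_coeffs n a) b)"
proof (rule eq_matI)
  fix t u assume "t < dim_row (regmat n (dih_elt n (reflect_coeffs n a) b))"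
    "u < dim_col (regmat n (dih_elt n (reflect_coeffs n a) b))"
  then have tu: "t < 2*n" "u < 2*n" by auto
  then have "transpose_mat (regmat n (dih_elt n a b)) $$ (t, u) = regmat n (dih_elt n a b) $$ (u, t)"
    by simp
  moreover have "t mod n < n" "u mod n < n" using tu by auto
  ultimately show "transpose_mat (regmat n (dih_elt n a b)) $$ (t, u)
      = regmat n (dih_elt n (reflect_coeffs n a) b) $$ (t, u)"
    using tu by (simp add: regmat_dih_elt_index reflect_coeffs_def neg_diff_mod)
qed auto

lemma power_mod_root_unity:
  fixes z :: "'a::monoid_mult"
  assumes "z ^ n = 1"
  shows "z ^ (p mod n) = z ^ p"
proof -
  have "z ^ p = (z ^ n) ^ (p div n) * z ^ (p mod n)"
    by (metis div_mult_mod_eq mult.commute power_add power_mult)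
  then show ?thesis by (simp add: assms)
qed

lemma sum_shifted_coeffs_root_unity:
  assumes zn: "z ^ n = (1::complex)" and m: "m < n"
  shows "(\<Sum>s<n. complex_of_real (a ((s + n - m) mod n)) * z ^ s) = z ^ m * poly_at n a z"
proof -
  define \<phi> where "\<phi> s = (s + n - m) mod n" for s
  define \<psi> where "\<psi> s = (s + m) mod n" for s
  have n: "n > 0" using m by auto
  have \<psi>\<phi>: "\<psi> (\<phi> s) = s" if "s < n" for s
  proof -
    have "\<psi> (\<phi> s) = (s + n - m + m) mod n" unfolding \<phi>_def \<psi>_def by (simp add: mod_add_left_eq)
    also have "s + n - m + m = s + n" using m by simp
    finally show ?thesis using that by simp
  qed
  have \<phi>\<psi>: "\<phi> (\<psi> s) = s" if "s < n" for s
    using that m unfolding \<phi>_def \<psi>_def by (cases "s + m < n") (auto simp: le_mod_geq)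
  have "(\<Sum>s<n. complex_of_real (a ((s + n - m) mod n)) * z ^ s)
      = (\<Sum>j<n. complex_of_real (a j) * z ^ (\<psi> j))"
    by (rule sum.reindex_bij_witness[of _ \<psi> \<phi>]) (auto simp: \<psi>\<phi> \<phi>\<psi> n, simp_all add: \<phi>_def \<psi>_def n)
  also have "\<dots> = (\<Sum>j<n. z ^ m * (complex_of_real (a j) * z ^ j))"
    unfolding \<psi>_def power_mod_root_unity[OF zn] by (simp add: power_add mult_ac)
  also have "\<dots> = z ^ m * poly_at n a z"
    by (simp add: poly_at_def sum_distrib_left)
  finally show ?thesis .
qed

lemma sum_reflected_coeffs_root_unity:
  assumes zn: "z ^ n = (1::complex)" and zc: "cnj z * z = 1" and m: "m < n"
  shows "(\<Sum>s<n. complex_of_real (a ((m + n - s) mod n)) * z ^ s) = z ^ m * cnj (poly_at n a z)"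
proof -
  define \<phi> where "\<phi> s = (m + n - s) mod n" for s
  have \<phi>: "\<phi> s < n" "\<phi> (\<phi> s) = s" if "s < n" for s
    using that m diff_mod_eq_iff[of s n m "\<phi> s"] by (auto simp: \<phi>_def)
  have z\<phi>: "z ^ \<phi> j = z ^ m * cnj z ^ j" if "j < n" for j
  proof -
    have "z ^ \<phi> j * z ^ j = z ^ (m + n - j + j)"
      unfolding \<phi>_def power_mod_root_unity[OF zn] by (simp only: power_add)
    also have "\<dots> = z ^ m" using that zn by (simp add: power_add)
    finally have "z ^ \<phi> j * z ^ j = z ^ m" .
    moreover have "z ^ m * cnj z ^ j * z ^ j = z ^ m"
      using zc by (simp add: mult.assoc flip: power_mult_distrib)
    moreover have "z ^ j \<noteq> 0" using zc by auto
    ultimately show ?thesis by (metis mult_right_cancel)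
  qed
  have "(\<Sum>s<n. complex_of_real (a ((m + n - s) mod n)) * z ^ s)
      = (\<Sum>j<n. complex_of_real (a j) * z ^ \<phi> j)"
    by (rule sum.reindex_bij_witness[of _ \<phi> \<phi>]) (use \<phi> in \<open>auto simp: \<phi>_def\<close>)
  also have "\<dots> = (\<Sum>j<n. z ^ m * (complex_of_real (a j) * cnj z ^ j))"
    by (rule sum.cong) (auto simp: z\<phi>)
  also have "\<dots> = z ^ m * cnj (poly_at n a z)"
    by (simp add: poly_at_def sum_distrib_left)
  finally show ?thesis .
qed

lemma poly_at_reflect_coeffs:
  assumes "n > 0" "z ^ n = (1::complex)" "cnj z * z = 1"
  shows "poly_at n (reflect_coeffs n a) z = cnj (poly_at n a z)"
  using sum_reflected_coeffs_root_unity[OF assms(2,3,1), of a]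
  by (simp add: poly_at_def reflect_coeffs_def)

lemma sum_atLeast0_double:
  "(\<Sum>s\<in>{0..<2*n}. f s) = (\<Sum>s<n. f s) + (\<Sum>s<n. f (n + s::nat))"
proof -
  have "(\<Sum>s\<in>{0..<2*n}. f s) = sum f {0..<n} + sum f {n..<n+n}"
    by (simp add: mult_2 sum.atLeastLessThan_concat)
  also have "sum f {n..<n+n} = (\<Sum>s<n. f (n + s))"
    using sum.shift_bounds_nat_ivl[of f 0 n n] by (simp add: add.commute lessThan_atLeast0)
  finally show ?thesis by (simp add: lessThan_atLeast0)
qed

definition fourier_vec :: "nat \<Rightarrow> complex \<Rightarrow> complex \<Rightarrow> complex \<Rightarrow> complex vec" where
  "fourier_vec n z c0 c1 = vec (2*n) (\<lambda>t. (if t < n then c0 else c1) * z ^ (t mod n))"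

lemma fourier_vec_carrier: "fourier_vec n z c0 c1 \<in> carrier_vec (2*n)"
  by (simp add: fourier_vec_def)

lemma smult_fourier_vec: "c \<cdot>\<^sub>v fourier_vec n z c0 c1 = fourier_vec n z (c * c0) (c * c1)"
  by (rule eq_vecI) (auto simp: fourier_vec_def)

lemma regmat_mult_fourier_vec:
  assumes zn: "z ^ n = 1" and zc: "cnj z * z = 1"
  shows "map_mat complex_of_real (regmat n (dih_elt n a b)) *\<^sub>v fourier_vec n z c0 c1 =
    fourier_vec n z (c0 * cnj (poly_at n a z) + c1 * poly_at n b z)
                    (c0 * cnj (poly_at n b z) + c1 * poly_at n a z)"
    (is "?A *\<^sub>v ?u = ?r")
proof (rule eq_vecI)
  show "dim_vec (?A *\<^sub>v ?u) = dim_vec ?r" by (simp add: fourier_vec_def)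
  fix t assume "t < dim_vec ?r"
  then have t: "t < 2*n" by (simp add: fourier_vec_def)
  define m where "m = t mod n"
  have m: "m < n" using t by (auto simp: m_def)
  let ?E = "\<lambda>s. complex_of_real (regmat n (dih_elt n a b) $$ (t,s))"
  have "(?A *\<^sub>v ?u) $ t = (\<Sum>s\<in>{0..<2*n}. ?E s * ?u $ s)"
    using t by (simp add: scalar_prod_def fourier_vec_def)
  also have "\<dots> = c0 * (\<Sum>s<n. ?E s * z ^ s) + c1 * (\<Sum>s<n. ?E (n+s) * z ^ s)"
    unfolding sum_atLeast0_double sum_distrib_left
    by (intro arg_cong2[where f="(+)"] sum.cong) (auto simp: fourier_vec_def)
  also have "\<dots> = ?r $ t"
  proof (cases "t < n")
    case True
    have "(\<Sum>s<n. ?E s * z ^ s) = z ^ m * cnj (poly_at n a z)"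
      unfolding sum_reflected_coeffs_root_unity[OF zn zc m, symmetric]
      by (rule sum.cong) (use t True in \<open>auto simp: regmat_dih_elt_index m_def\<close>)
    moreover have "(\<Sum>s<n. ?E (n+s) * z ^ s) = z ^ m * poly_at n b z"
      unfolding sum_shifted_coeffs_root_unity[OF zn m, symmetric]
      by (rule sum.cong) (use t True in \<open>auto simp: regmat_dih_elt_index m_def\<close>)
    ultimately show ?thesis using True t by (simp add: fourier_vec_def m_def algebra_simps)
  next
    case False
    have "(\<Sum>s<n. ?E s * z ^ s) = z ^ m * cnj (poly_at n b z)"
      unfolding sum_reflected_coeffs_root_unity[OF zn zc m, symmetric]
      by (rule sum.cong) (use t False in \<open>auto simp: regmat_dih_elt_index m_def\<close>)
    moreover have "(\<Sum>s<n. ?E (n+s) * z ^ s) = z ^ m * poly_at n a z"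
      unfolding sum_shifted_coeffs_root_unity[OF zn m, symmetric]
      by (rule sum.cong) (use t False in \<open>auto simp: regmat_dih_elt_index m_def\<close>)
    ultimately show ?thesis using False t by (simp add: fourier_vec_def m_def algebra_simps)
  qed
  finally show "(?A *\<^sub>v ?u) $ t = ?r $ t" .
qed

lemma transpose_regmat_mult_fourier_vec:
  assumes "n > 0" "z ^ n = 1" "cnj z * z = 1"
  shows "map_mat complex_of_real (transpose_mat (regmat n (dih_elt n a b))) *\<^sub>v fourier_vec n z c0 c1 =
    fourier_vec n z (c0 * poly_at n a z + c1 * poly_at n b z)
                    (c0 * cnj (poly_at n b z) + c1 * cnj (poly_at n a z))"
  unfolding transpose_regmat_dih_elt regmat_mult_fourier_vec[OF assms(2,3)]
    poly_at_reflect_coeffs[OF assms] by simp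

lemma cnj_mult_self_unimodular:
  assumes "cmod z = 1"
  shows "cnj z * z = 1"
  using complex_norm_square[of z] assms by (simp add: mult.commute)

lemma cis_power_root_unity:
  assumes "n > 0"
  shows "(cis (2 * pi / real n) ^ i) ^ n = 1"
proof -
  have "(cis (2 * pi / real n) ^ i) ^ n = (cis (2 * pi / real n) ^ n) ^ i"
    by (simp add: mult.commute flip: power_mult)
  also have "cis (2 * pi / real n) ^ n = 1" using assms by (simp add: DeMoivre)
  finally show ?thesis by simp
qed

lemma cis_power_inj:
  assumes "n > 0" "p < n" "q < n" "cis (2 * pi / real n) ^ p = cis (2 * pi / real n) ^ q"
  shows "p = q"
proof -
  have "inj_on (\<lambda>k. cis (2 * pi * real k / real n)) {..<n}"
    using bij_betw_roots_unity[OF assms(1)] by (rule bij_betw_imp_inj_on)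
  moreover have "cis (2 * pi * real k / real n) = cis (2 * pi / real n) ^ k" for k
    by (simp add: DeMoivre mult_ac)
  ultimately show ?thesis using assms by (auto dest: inj_onD)
qed

text \<open>With the phase \<sigma> of F * cnj G, the vector (1, e \<sigma>) is an eigenvector of
  [[cnj F, G], [cnj G, F]] * [[F, G], [cnj G, cnj F]] with eigenvalue (|F| + e |G|)^2.\<close>

lemma gram_block_eigen:
  fixes F G \<sigma> :: complex and e :: real
  assumes e: "e * e = 1"
  defines "\<sigma> \<equiv> cis (Arg (F * cnj G))"
  shows "(F + of_real e * \<sigma> * G) * cnj F + (cnj G + of_real e * \<sigma> * cnj F) * G
           = of_real ((cmod F + e * cmod G)\<^sup>2)" (is "?L1 = ?R1")
    and "(F + of_real e * \<sigma> * G) * cnj G + (cnj G + of_real e * \<sigma> * cnj F) * F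
           = of_real ((cmod F + e * cmod G)\<^sup>2) * (of_real e * \<sigma>)" (is "?L2 = ?R2")
proof -
  define r where "r = cmod F * cmod G"
  have FG: "F * cnj G = \<sigma> * of_real r"
    using rcis_cmod_Arg[of "F * cnj G"] by (simp add: \<sigma>_def r_def rcis_def norm_mult mult.commute)
  have \<sigma>: "cnj \<sigma> * \<sigma> = 1" by (simp add: \<sigma>_def cnj_mult_self_unimodular)
  have GF: "\<sigma> * (cnj F * G) = of_real r"
  proof -
    have "cnj F * G = cnj \<sigma> * of_real r" using arg_cong[OF FG, of cnj] by simp
    then show ?thesis using \<sigma> by (simp add: mult.assoc mult.left_commute[of \<sigma>])
  qed
  have F: "F * cnj F = of_real ((cmod F)\<^sup>2)" and G: "G * cnj G = of_real ((cmod G)\<^sup>2)"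
    by (simp_all flip: complex_norm_square)
  have ee: "complex_of_real e * e = 1" by (metis e of_real_1 of_real_mult)
  have sq: "(cmod F + e * cmod G)\<^sup>2 = (cmod F)\<^sup>2 + (cmod G)\<^sup>2 + 2 * e * r"
    using e by (simp add: power2_eq_square algebra_simps r_def)
  have "?L1 = F * cnj F + G * cnj G + 2 * of_real e * (\<sigma> * (cnj F * G))" by (simp add: algebra_simps)
  also have "\<dots> = ?R1" unfolding F G GF sq by simp
  finally show "?L1 = ?R1" .
  have "?L2 = 2 * (F * cnj G) + of_real e * \<sigma> * (G * cnj G + F * cnj F)" by (simp add: algebra_simps)
  also have "\<dots> = ?R2" unfolding F G FG sq using ee by (simp add: algebra_simps)
  finally show "?L2 = ?R2" .
qed

definition pm_sign :: "nat \<Rightarrow> nat \<Rightarrow> real" where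
  "pm_sign n j = (if j < n then 1 else -1)"

text \<open>The index j < 2n stands for the pair (j mod n, \<plusminus>): the Fourier frequency
  \<xi>^(j mod n) and the sign of the 2x2 block eigenvector.\<close>

definition dih_eigvec :: "nat \<Rightarrow> (nat \<Rightarrow> real) \<Rightarrow> (nat \<Rightarrow> real) \<Rightarrow> nat \<Rightarrow> complex vec" where
  "dih_eigvec n a b j = (let z = cis (2 * pi / real n) ^ (j mod n) in
     fourier_vec n z 1 (of_real (pm_sign n j) * cis (Arg (poly_at n a z * cnj (poly_at n b z)))))"

lemma regmat_gram_dih_eigvec:
  fixes n j :: nat and a b :: "nat \<Rightarrow> real"
  assumes n: "n > 0"
  defines "z \<equiv> cis (2 * pi / real n) ^ (j mod n)"
  defines "A \<equiv> regmat n (dih_elt n a b)"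
  shows "map_mat complex_of_real (A * transpose_mat A) *\<^sub>v dih_eigvec n a b j =
    of_real ((cmod (poly_at n a z) + pm_sign n j * cmod (poly_at n b z))\<^sup>2) \<cdot>\<^sub>v dih_eigvec n a b j"
proof -
  define F G e \<sigma> where "F = poly_at n a z" and "G = poly_at n b z" and "e = pm_sign n j"
    and "\<sigma> = cis (Arg (F * cnj G))"
  have ee: "e * e = 1" by (simp add: e_def pm_sign_def)
  have zn: "z ^ n = 1" by (simp add: z_def n cis_power_root_unity)
  have zc: "cnj z * z = 1" by (rule cnj_mult_self_unimodular) (simp add: z_def norm_power)
  have w: "dih_eigvec n a b j = fourier_vec n z 1 (of_real e * \<sigma>)"
    by (simp add: dih_eigvec_def Let_def z_def F_def G_def e_def \<sigma>_def)
  have hom: "map_mat complex_of_real (A * transpose_mat A)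
      = map_mat complex_of_real A * map_mat complex_of_real (transpose_mat A)"
    using regmat_carrier[of n "dih_elt n a b"] by (simp add: A_def of_real_hom.mat_hom_mult)
  have "map_mat complex_of_real (A * transpose_mat A) *\<^sub>v dih_eigvec n a b j
      = map_mat complex_of_real A *\<^sub>v (map_mat complex_of_real (transpose_mat A) *\<^sub>v dih_eigvec n a b j)"
    unfolding hom w by (rule assoc_mult_mat_vec) (auto simp: A_def regmat_carrier fourier_vec_carrier)
  also have "\<dots> = fourier_vec n z ((F + of_real e * \<sigma> * G) * cnj F + (cnj G + of_real e * \<sigma> * cnj F) * G)
      ((F + of_real e * \<sigma> * G) * cnj G + (cnj G + of_real e * \<sigma> * cnj F) * F)"
    unfolding w A_def transpose_regmat_mult_fourier_vec[OF n zn zc] regmat_mult_fourier_vec[OF zn zc]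
    by (simp add: F_def G_def algebra_simps)
  also have "\<dots> = of_real ((cmod F + e * cmod G)\<^sup>2) \<cdot>\<^sub>v dih_eigvec n a b j"
    unfolding w smult_fourier_vec \<sigma>_def gram_block_eigen[OF ee] by simp
  finally show ?thesis by (simp add: F_def G_def e_def)
qed

lemma dih_eigvec_orthogonal:
  assumes n: "n > 0" and j: "j < 2*n" and l: "l < 2*n"
  shows "(\<Sum>t\<in>{0..<2*n}. cnj (dih_eigvec n a b j $ t) * dih_eigvec n a b l $ t)
    = (if j = l then of_nat (2*n) else 0)"
proof -
  define x where "x = cis (2 * pi / real n)"
  define p q where "p = j mod n" and "q = l mod n"
  define \<sigma> where "\<sigma> k = cis (Arg (poly_at n a (x ^ k) * cnj (poly_at n b (x ^ k))))" for k
  define cj cl where "cj = of_real (pm_sign n j) * \<sigma> p" and "cl = of_real (pm_sign n l) * \<sigma> q"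
  define w where "w = cnj (x ^ p) * x ^ q"
  have unit: "cnj (x ^ k) * x ^ k = 1" for k
    by (rule cnj_mult_self_unimodular) (simp add: x_def norm_power)
  have "(\<Sum>t\<in>{0..<2*n}. cnj (dih_eigvec n a b j $ t) * dih_eigvec n a b l $ t)
     = (\<Sum>s<n. cnj ((x ^ p) ^ s) * (x ^ q) ^ s) + (\<Sum>s<n. cnj (cj * (x ^ p) ^ s) * (cl * (x ^ q) ^ s))"
    unfolding sum_atLeast0_double
    by (intro arg_cong2[where f="(+)"] sum.cong)
      (auto simp: dih_eigvec_def Let_def fourier_vec_def x_def p_def q_def cj_def cl_def \<sigma>_def)
  also have "\<dots> = (1 + cnj cj * cl) * (\<Sum>s<n. w ^ s)"
    by (simp add: w_def power_mult_distrib sum_distrib_left algebra_simps sum.distrib)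
  also have "\<dots> = (if j = l then of_nat (2*n) else 0)"
  proof (cases "p = q")
    case True
    have "w = 1" unfolding w_def True by (rule unit)
    then have S: "(\<Sum>s<n. w ^ s) = of_nat n" by simp
    have cc: "cnj cj * cl = of_real (pm_sign n j * pm_sign n l)"
    proof -
      have "cnj (\<sigma> q) * \<sigma> q = 1" unfolding \<sigma>_def by (rule cnj_mult_self_unimodular) simp
      then show ?thesis unfolding cj_def cl_def True by (simp add: algebra_simps)
    qed
    have "j = l \<longleftrightarrow> (j < n \<longleftrightarrow> l < n)"
      using True j l unfolding p_def q_def by (cases "j < n"; cases "l < n") (auto simp: le_mod_geq)
    then show ?thesis unfolding S cc by (auto simp: pm_sign_def)
  next
    case False
    then have "j \<noteq> l" unfolding p_def q_def by auto
    have "w ^ n = 1"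
      using cis_power_root_unity[OF n] by (simp add: w_def x_def power_mult_distrib flip: complex_cnj_power)
    moreover have "w \<noteq> 1"
    proof
      assume "w = 1"
      have "x ^ q = (cnj (x ^ p) * x ^ p) * x ^ q" by (simp only: unit mult_1)
      also have "\<dots> = x ^ p * w" by (simp add: w_def)
      finally have "x ^ q = x ^ p" using \<open>w = 1\<close> by simp
      then show False using cis_power_inj[OF n, of q p] False n by (simp add: x_def p_def q_def)
    qed
    ultimately have "(\<Sum>s<n. w ^ s) = 0" by (simp add: geometric_sum)
    then show ?thesis using \<open>j \<noteq> l\<close> by simp
  qed
  finally show ?thesis .
qed

lemma char_poly_eigenbasis:
  fixes M W Q :: "'a::field mat"
  assumes M: "M \<in> carrier_mat m m" and W: "W \<in> carrier_mat m m" and Q: "Q \<in> carrier_mat m m"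
    and QW: "Q * W = 1\<^sub>m m"
    and eig: "\<And>j. j < m \<Longrightarrow> M *\<^sub>v col W j = \<mu> j \<cdot>\<^sub>v col W j"
  shows "char_poly M = (\<Prod>j<m. [:- \<mu> j, 1:])"
proof -
  define D where "D = mat_diag m \<mu>"
  have MW: "M * W = W * D"
  proof (rule eq_matI)
    fix t j assume "t < dim_row (W * D)" "j < dim_col (W * D)"
    then have t: "t < m" and j: "j < m" using W by (auto simp: D_def mat_diag_def)
    have "(M * W) $$ (t,j) = (M *\<^sub>v col W j) $ t" using M W t j by simp
    also have "\<dots> = W $$ (t,j) * \<mu> j" using eig[OF j] W t j by simp
    also have "\<dots> = (W * D) $$ (t,j)" using W t j by (simp add: D_def mat_diag_mult_right)
    finally show "(M * W) $$ (t,j) = (W * D) $$ (t,j)" .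
  qed (use M W in \<open>auto simp: D_def mat_diag_def\<close>)
  have WQ: "W * Q = 1\<^sub>m m" by (rule mat_mult_left_right_inverse[OF Q W QW])
  have "M = M * (W * Q)" using M by (simp add: WQ)
  also have "\<dots> = W * D * Q" using M W Q by (simp add: MW flip: assoc_mult_mat[of M m m W m Q m])
  finally have "similar_mat M D"
    by (intro similar_matI[of M D W Q m]) (use M W Q WQ QW in \<open>auto simp: D_def\<close>)
  then have "char_poly M = char_poly D" by (rule char_poly_similar)
  also have "\<dots> = prod_list (map (\<lambda>a. [:- a, 1:]) (map \<mu> [0..<m]))"
    by (subst char_poly_upper_triangular[of _ m])
      (auto simp: D_def mat_diag_def upper_triangular_def diag_mat_def intro!: arg_cong[where f=prod_list])
  also have "\<dots> = (\<Prod>j<m. [:- \<mu> j, 1:])"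
    by (simp add: prod.distinct_set_conv_list[symmetric] comp_def lessThan_atLeast0)
  finally show ?thesis .
qed

lemma prod_lessThan_double:
  "(\<Prod>s<2*n. f s) = (\<Prod>s<n. f s) * (\<Prod>s<n. f (n + s::nat))"
proof -
  have "(\<Prod>s<2*n. f s) = prod f {0..<n} * prod f {n..<n+n}"
    by (simp add: mult_2 prod.atLeastLessThan_concat flip: atLeast0LessThan)
  also have "prod f {n..<n+n} = (\<Prod>s<n. f (n + s))"
    using prod.shift_bounds_nat_ivl[of f 0 n n] by (simp add: add.commute lessThan_atLeast0)
  finally show ?thesis by (simp add: lessThan_atLeast0)
qed

lemma char_poly_map_regmat_gram:
  fixes n :: nat and a b :: "nat \<Rightarrow> real"
  assumes n: "n > 0"
  defines "A \<equiv> regmat n (dih_elt n a b)"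
  defines "F j \<equiv> cmod (poly_at n a (cis (2 * pi / real n) ^ (j mod n)))"
  defines "G j \<equiv> cmod (poly_at n b (cis (2 * pi / real n) ^ (j mod n)))"
  shows "char_poly (map_mat complex_of_real (A * transpose_mat A))
    = (\<Prod>j<2*n. [:- of_real ((F j + pm_sign n j * G j)\<^sup>2), 1:])"
proof (rule char_poly_eigenbasis)
  define W where "W = mat (2*n) (2*n) (\<lambda>(t,j). dih_eigvec n a b j $ t)"
  have col: "col W j = dih_eigvec n a b j" if "j < 2*n" for j
    using that by (auto simp: W_def dih_eigvec_def Let_def fourier_vec_def intro!: eq_vecI)
  show "W \<in> carrier_mat (2*n) (2*n)" by (simp add: W_def)
  show "mat (2*n) (2*n) (\<lambda>(j,t). cnj (W $$ (t,j)) / of_nat (2*n)) * W = 1\<^sub>m (2*n)"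
  proof (rule eq_matI)
    fix j l assume "j < dim_row (1\<^sub>m (2*n) :: complex mat)" "l < dim_col (1\<^sub>m (2*n) :: complex mat)"
    then have j: "j < 2*n" and l: "l < 2*n" by auto
    have "(mat (2*n) (2*n) (\<lambda>(j,t). cnj (W $$ (t,j)) / of_nat (2*n)) * W) $$ (j,l)
        = (\<Sum>t\<in>{0..<2*n}. cnj (dih_eigvec n a b j $ t) * dih_eigvec n a b l $ t) / of_nat (2*n)"
      using j l by (simp add: scalar_prod_def W_def sum_divide_distrib)
    then show "(mat (2*n) (2*n) (\<lambda>(j,t). cnj (W $$ (t,j)) / of_nat (2*n)) * W) $$ (j,l) = 1\<^sub>m (2*n) $$ (j,l)"
      using j l n by (simp add: dih_eigvec_orthogonal)
  qed (auto simp: W_def)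
  show "map_mat complex_of_real (A * transpose_mat A) *\<^sub>v col W j
      = of_real ((F j + pm_sign n j * G j)\<^sup>2) \<cdot>\<^sub>v col W j" if "j < 2*n" for j
    unfolding col[OF that] A_def F_def G_def by (rule regmat_gram_dih_eigvec[OF n])
qed (auto simp: A_def regmat_carrier)

interpretation of_real_poly_hom: map_poly_inj_idom_hom of_real ..

lemma char_poly_regmat_gram:
  fixes n :: nat and a b :: "nat \<Rightarrow> real"
  assumes n: "n > 0"
  defines "A \<equiv> regmat n (dih_elt n a b)"
  defines "F i \<equiv> cmod (poly_at n a (cis (2 * pi / real n) ^ i))"
  defines "G i \<equiv> cmod (poly_at n b (cis (2 * pi / real n) ^ i))"
  shows "char_poly (A * transpose_mat A) = (\<Prod>i<n. [:- ((F i + G i)\<^sup>2), 1:] * [:- ((F i - G i)\<^sup>2), 1:])"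
proof -
  have "map_poly complex_of_real (char_poly (A * transpose_mat A))
      = char_poly (map_mat complex_of_real (A * transpose_mat A))"
    by (rule of_real_hom.char_poly_hom[of _ "2*n", symmetric])
      (use regmat_carrier[of n "dih_elt n a b"] in \<open>simp add: A_def\<close>)
  also have "\<dots> = (\<Prod>j<2*n. [:- of_real ((F (j mod n) + pm_sign n j * G (j mod n))\<^sup>2), 1:])"
    unfolding A_def F_def G_def by (rule char_poly_map_regmat_gram[OF n])
  also have "\<dots> = (\<Prod>i<n. [:- of_real ((F i + G i)\<^sup>2), 1:] * [:- of_real ((F i - G i)\<^sup>2), 1:])"
    unfolding prod_lessThan_double prod.distrib by (intro arg_cong2[where f="(*)"] prod.cong) (auto simp: pm_sign_def)
  also have "\<dots> = map_poly complex_of_real (\<Prod>i<n. [:- ((F i + G i)\<^sup>2), 1:] * [:- ((F i - G i)\<^sup>2), 1:])"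
    by (simp add: of_real_poly_hom.hom_prod of_real_poly_hom.hom_mult)
  finally show ?thesis by simp
qed

lemma eigenvalues_eq_if_char_poly_factors:
  fixes A :: "'a::field mat"
  assumes "A \<in> carrier_mat m m" "finite I"
    and "char_poly A = (\<Prod>i\<in>I. [:- p i, 1:] * [:- q i, 1:])"
  shows "{t. eigenvalue A t} = p ` I \<union> q ` I"
proof -
  have "eigenvalue A t \<longleftrightarrow> poly (char_poly A) t = 0" for t
    by (rule eigenvalue_root_char_poly[OF assms(1)])
  also have "poly (char_poly A) t = 0 \<longleftrightarrow> t \<in> p ` I \<union> q ` I" for t
    unfolding assms(3) poly_prod poly_mult prod_zero_iff[OF assms(2)] by auto
  finally show ?thesis by auto
qed

lemma sqrt_Max_squares_le:
  fixes x y :: "nat \<Rightarrow> real"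
  assumes I: "finite I" "I \<noteq> {}" and nonneg: "\<And>i. 0 \<le> x i" "\<And>i. 0 \<le> y i"
  shows "sqrt (Max ((\<lambda>i. (x i + y i)\<^sup>2) ` I \<union> (\<lambda>i. (x i - y i)\<^sup>2) ` I)) \<le> Max ((\<lambda>i. x i + y i) ` I)"
    (is "sqrt (Max ?S) \<le> _")
proof -
  have "Max ?S \<in> ?S" using I by (intro Max_in) auto
  then obtain i where i: "i \<in> I" and "Max ?S = (x i + y i)\<^sup>2 \<or> Max ?S = (x i - y i)\<^sup>2" by auto
  moreover have "(x i - y i)\<^sup>2 \<le> (x i + y i)\<^sup>2"
    using nonneg[of i] by (simp add: power2_eq_square algebra_simps)
  ultimately have "Max ?S \<le> (x i + y i)\<^sup>2" by auto
  then have "sqrt (Max ?S) \<le> sqrt ((x i + y i)\<^sup>2)" by (rule real_sqrt_le_mono)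
  also have "\<dots> = x i + y i" using nonneg[of i] by simp
  also have "\<dots> \<le> Max ((\<lambda>i. x i + y i) ` I)" using I i by (intro Max_ge) auto
  finally show ?thesis .
qed

theorem lemma2:
  fixes n :: nat and a b :: "nat \<Rightarrow> real"
  assumes "n \<ge> 1"
  defines "\<xi> \<equiv> cis (2 * pi / real n)"
  defines "h \<equiv> dih_elt n a b"
  shows "char_poly (regmat n h * transpose_mat (regmat n h)) =
           (\<Prod>i<n. [: - ((cmod (poly_at n a (\<xi> ^ i)) + cmod (poly_at n b (\<xi> ^ i)))\<^sup>2), 1 :]
                  * [: - ((cmod (poly_at n a (\<xi> ^ i)) - cmod (poly_at n b (\<xi> ^ i)))\<^sup>2), 1 :])
       \<and> mat_norm n h \<le> Max ((\<lambda>i. cmod (poly_at n a (\<xi> ^ i)) + cmod (poly_at n b (\<xi> ^ i))) ` {0..<n})"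
proof -
  have n: "n > 0" using assms(1) by simp
  define F G where "F i = cmod (poly_at n a (\<xi> ^ i))" and "G i = cmod (poly_at n b (\<xi> ^ i))" for i
  define M where "M = regmat n h * transpose_mat (regmat n h)"
  have char_poly: "char_poly M = (\<Prod>i<n. [:- ((F i + G i)\<^sup>2), 1:] * [:- ((F i - G i)\<^sup>2), 1:])"
    unfolding M_def h_def F_def G_def \<xi>_def by (rule char_poly_regmat_gram[OF n])
  have "M \<in> carrier_mat (2*n) (2*n)" using regmat_carrier[of n h] by (simp add: M_def)
  then have eigenvalues: "{t. eigenvalue M t} = (\<lambda>i. (F i + G i)\<^sup>2) ` {..<n} \<union> (\<lambda>i. (F i - G i)\<^sup>2) ` {..<n}"
    by (rule eigenvalues_eq_if_char_poly_factors[OF _ finite_lessThan char_poly])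
  have "mat_norm n h \<le> Max ((\<lambda>i. F i + G i) ` {..<n})"
    unfolding mat_norm_def M_def[symmetric] eigenvalues
    by (rule sqrt_Max_squares_le) (use n in \<open>auto simp: F_def G_def\<close>)
  with char_poly show ?thesis by (simp add: M_def F_def G_def atLeast0LessThan)
qed

end
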